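(* If $A\subseteq\omega$ is c.e. and has density $1$ effectively, then $A$ has a computable subset $B$ which has density $1$ effectively.
   Context: For $S\subseteq\omega$ and $n>0$, $\rho_n(S)=|S\cap[0,n)|/n$. For a set $A$ of density $1$ (i.e. $\lim_n\rho_n(A)=1$), a function $w:\omega\to\omega$ witnesses that $A$ has density $1$ if for all $k$ and all $n\ge w(k)$, $\rho_n(A)\ge 1-2^{-k}$. The set $A$ has density $1$ effectively if there is a computable function which witnesses that $A$ has density $1$. *)

theory Defs
  imports Complex_Main
begin

text \<open>A function of arity n is a HOL function on nat lists; only its values on
lists of length n are meaningful.\<close>

definition comp_fn :: "(nat list \<Rightarrow> nat) \<Rightarrow> (nat list \<Rightarrow> nat) list \<Rightarrow> nat list \<Rightarrow> nat" where
  "comp_fn f gs = (\<lambda>xs. f (map (\<lambda>g. g xs) gs))"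

definition prec_fn :: "(nat list \<Rightarrow> nat) \<Rightarrow> (nat list \<Rightarrow> nat) \<Rightarrow> nat list \<Rightarrow> nat" where
  "prec_fn g h = (\<lambda>xs. rec_nat (g (tl xs)) (\<lambda>k r. h (r # k # tl xs)) (hd xs))"

definition mu_fn :: "(nat list \<Rightarrow> nat) \<Rightarrow> nat list \<Rightarrow> nat" where
  "mu_fn f = (\<lambda>xs. LEAST y. f (y # xs) = 0)"

inductive recfn :: "nat \<Rightarrow> (nat list \<Rightarrow> nat) \<Rightarrow> bool" where
  rf_zero: "recfn n (\<lambda>_. 0)"
| rf_suc: "recfn 1 (\<lambda>xs. Suc (hd xs))"
| rf_proj: "i < n \<Longrightarrow> recfn n (\<lambda>xs. xs ! i)"
| rf_comp: "recfn (length gs) f \<Longrightarrow> (\<forall>g \<in> set gs. recfn n g) \<Longrightarrow> recfn n (comp_fn f gs)"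
| rf_prec: "recfn n g \<Longrightarrow> recfn (Suc (Suc n)) h \<Longrightarrow> recfn (Suc n) (prec_fn g h)"
| rf_mu: "recfn (Suc n) f \<Longrightarrow> (\<forall>xs. length xs = n \<longrightarrow> (\<exists>y. f (y # xs) = 0))
           \<Longrightarrow> recfn n (mu_fn f)"

definition computable_fun :: "(nat \<Rightarrow> nat) \<Rightarrow> bool" where
  "computable_fun w \<longleftrightarrow> (\<exists>f. recfn 1 f \<and> (\<forall>k. w k = f [k]))"

definition computable_set :: "nat set \<Rightarrow> bool" where
  "computable_set S \<longleftrightarrow> (\<exists>f. recfn 1 f \<and> (\<forall>x. x \<in> S \<longleftrightarrow> f [x] = 0))"

definition ce_set :: "nat set \<Rightarrow> bool" where
  "ce_set S \<longleftrightarrow> (\<exists>f. recfn 2 f \<and> (\<forall>x. x \<in> S \<longleftrightarrow> (\<exists>y. f [y, x] = 0)))"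

definition rho :: "nat \<Rightarrow> nat set \<Rightarrow> real" where
  "rho n S = real (card (S \<inter> {0..<n})) / real n"

definition has_density_one :: "nat set \<Rightarrow> bool" where
  "has_density_one A \<longleftrightarrow> (\<lambda>n. rho n A) \<longlonglongrightarrow> 1"

definition density_one_witness :: "(nat \<Rightarrow> nat) \<Rightarrow> nat set \<Rightarrow> bool" where
  "density_one_witness w A \<longleftrightarrow>
     (\<forall>k n. 0 < n \<longrightarrow> w k \<le> n \<longrightarrow> rho n A \<ge> 1 - 1 / 2 ^ k)"

definition density_one_effectively :: "nat set \<Rightarrow> bool" where
  "density_one_effectively A \<longleftrightarrow>
     has_density_one A \<and> (\<exists>w. computable_fun w \<and> density_one_witness w A)"

end

theory Submission
  imports Defs
begin

text \<open>Let \<open>A\<^sub>s\<close> be the part of \<open>A\<close> enumerated by stage \<open>s\<close>. For each \<open>x\<close> let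
\<open>\<sigma>(x)\<close> be the least stage at which \<open>A\<^sub>s\<close> already satisfies the density inequalities of the
witness \<open>w\<close> for all precisions \<open>k \<le> x\<close> and all lengths \<open>n < (x+1)2\<^sup>x\<close>; it exists because \<open>A\<close>
itself satisfies them, and it is computable and nondecreasing in \<open>x\<close>. The set
\<open>B = {x. x \<in> A\<^sub>\<sigma>\<^sub>(\<^sub>x\<^sub>)}\<close> is a decidable subset of \<open>A\<close>. Given \<open>k\<close> and a large \<open>n\<close>, put
\<open>h = n div 2\<^sup>k\<^sup>+\<^sup>1\<close>: then \<open>n < (h+1)2\<^sup>h\<close>, so \<open>A\<^sub>\<sigma>\<^sub>(\<^sub>h\<^sub>)\<close> misses at most \<open>n/2\<^sup>k\<^sup>+\<^sup>1\<close> numbers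
below \<open>n\<close>, and by monotonicity of \<open>\<sigma>\<close> all its elements in \<open>[h, n)\<close> lie in \<open>B\<close>. Hence \<open>B\<close> misses
at most \<open>n/2\<^sup>k\<^sup>+\<^sup>1 + h \<le> n/2\<^sup>k\<close> numbers below \<open>n\<close>.\<close>

section \<open>Closure properties of general recursive functions\<close>

definition computable_fn :: "nat \<Rightarrow> (nat list \<Rightarrow> nat) \<Rightarrow> bool" where
  "computable_fn n F \<longleftrightarrow> (\<exists>f. recfn n f \<and> (\<forall>xs. length xs = n \<longrightarrow> f xs = F xs))"

lemma computable_fn_cong:
  "computable_fn n F \<Longrightarrow> (\<And>xs. length xs = n \<Longrightarrow> F xs = G xs) \<Longrightarrow> computable_fn n G"
  unfolding computable_fn_def by metis

lemma recfn_computable_fn: "recfn n f \<Longrightarrow> computable_fn n f"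
  unfolding computable_fn_def by blast

lemma computable_fn_proj: "i < n \<Longrightarrow> computable_fn n (\<lambda>xs. xs ! i)"
  by (rule recfn_computable_fn) (rule rf_proj)

lemma computable_fn_list:
  assumes "\<forall>G\<in>set Gs. computable_fn n G"
  shows "\<exists>gs. length gs = length Gs \<and> (\<forall>g\<in>set gs. recfn n g)
           \<and> (\<forall>xs. length xs = n \<longrightarrow> map (\<lambda>g. g xs) gs = map (\<lambda>G. G xs) Gs)"
  using assms
proof (induction Gs)
  case (Cons G Gs)
  then obtain gs where "length gs = length Gs" "\<forall>g\<in>set gs. recfn n g"
    "\<forall>xs. length xs = n \<longrightarrow> map (\<lambda>g. g xs) gs = map (\<lambda>G. G xs) Gs" by auto
  moreover obtain g where "recfn n g" "\<forall>xs. length xs = n \<longrightarrow> g xs = G xs"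
    using Cons.prems unfolding computable_fn_def by auto
  ultimately show ?case by (intro exI[of _ "g # gs"]) auto
qed simp

lemma computable_fn_comp:
  assumes "computable_fn (length Gs) F" and "\<forall>G\<in>set Gs. computable_fn n G"
  shows "computable_fn n (\<lambda>xs. F (map (\<lambda>G. G xs) Gs))"
proof -
  obtain f where f: "recfn (length Gs) f" "\<forall>ys. length ys = length Gs \<longrightarrow> f ys = F ys"
    using assms(1) unfolding computable_fn_def by auto
  obtain gs where gs: "length gs = length Gs" "\<forall>g\<in>set gs. recfn n g"
    "\<forall>xs. length xs = n \<longrightarrow> map (\<lambda>g. g xs) gs = map (\<lambda>G. G xs) Gs"
    using computable_fn_list[OF assms(2)] by auto
  have "recfn n (comp_fn f gs)"
    using rf_comp[of gs f n] f(1) gs(1,2) by simp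
  moreover have "\<forall>xs. length xs = n \<longrightarrow> comp_fn f gs xs = F (map (\<lambda>G. G xs) Gs)"
    using f(2) gs(3) by (simp add: comp_fn_def)
  ultimately show ?thesis
    unfolding computable_fn_def by blast
qed

lemma computable_fn_comp1:
  "computable_fn 1 F \<Longrightarrow> computable_fn n G \<Longrightarrow> computable_fn n (\<lambda>xs. F [G xs])"
  using computable_fn_comp[of "[G]" F n] by simp

lemma computable_fn_comp2:
  "computable_fn 2 F \<Longrightarrow> computable_fn n G\<^sub>1 \<Longrightarrow> computable_fn n G\<^sub>2
    \<Longrightarrow> computable_fn n (\<lambda>xs. F [G\<^sub>1 xs, G\<^sub>2 xs])"
  using computable_fn_comp[of "[G\<^sub>1, G\<^sub>2]" F n] by (simp add: numeral_2_eq_2)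

lemma computable_fn_comp3:
  "computable_fn 3 F \<Longrightarrow> computable_fn n G\<^sub>1 \<Longrightarrow> computable_fn n G\<^sub>2 \<Longrightarrow> computable_fn n G\<^sub>3
    \<Longrightarrow> computable_fn n (\<lambda>xs. F [G\<^sub>1 xs, G\<^sub>2 xs, G\<^sub>3 xs])"
  using computable_fn_comp[of "[G\<^sub>1, G\<^sub>2, G\<^sub>3]" F n] by (simp add: numeral_3_eq_3)

lemma computable_fn_Suc: "computable_fn n G \<Longrightarrow> computable_fn n (\<lambda>xs. Suc (G xs))"
  using computable_fn_comp1[OF recfn_computable_fn[OF rf_suc], of n G] by simp

lemma computable_fn_const: "computable_fn n (\<lambda>_. c)"
  by (induction c) (auto intro: recfn_computable_fn rf_zero computable_fn_Suc[where G = "\<lambda>_. _"])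

lemma computable_fn_prec:
  assumes "computable_fn n G" and "computable_fn (Suc (Suc n)) H"
  shows "computable_fn (Suc n) (\<lambda>xs. rec_nat (G (tl xs)) (\<lambda>k r. H (r # k # tl xs)) (hd xs))"
proof -
  obtain g where g: "recfn n g" "\<forall>xs. length xs = n \<longrightarrow> g xs = G xs"
    using assms(1) unfolding computable_fn_def by auto
  obtain h where h: "recfn (Suc (Suc n)) h" "\<forall>xs. length xs = Suc (Suc n) \<longrightarrow> h xs = H xs"
    using assms(2) unfolding computable_fn_def by auto
  have "prec_fn g h xs = rec_nat (G (tl xs)) (\<lambda>k r. H (r # k # tl xs)) (hd xs)"
    if "length xs = Suc n" for xs
    using g(2) h(2) that by (simp add: prec_fn_def)
  then show ?thesis
    unfolding computable_fn_def using rf_prec[OF g(1) h(1)] by blast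
qed

lemma computable_fn_mu:
  assumes "computable_fn (Suc n) F" and "\<forall>xs. length xs = n \<longrightarrow> (\<exists>y. F (y # xs) = 0)"
  shows "computable_fn n (\<lambda>xs. LEAST y. F (y # xs) = 0)"
proof -
  obtain f where f: "recfn (Suc n) f" "\<forall>xs. length xs = Suc n \<longrightarrow> f xs = F xs"
    using assms(1) unfolding computable_fn_def by auto
  have "recfn n (mu_fn f)"
    using f assms(2) by (intro rf_mu) auto
  moreover have "\<forall>xs. length xs = n \<longrightarrow> mu_fn f xs = (LEAST y. F (y # xs) = 0)"
    using f(2) by (simp add: mu_fn_def)
  ultimately show ?thesis
    unfolding computable_fn_def by blast
qed

lemma computable_fn_tl: "computable_fn n F \<Longrightarrow> computable_fn (Suc n) (\<lambda>ys. F (tl ys))"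
proof -
  assume F: "computable_fn n F"
  have tl_eq: "map (\<lambda>i. ys ! Suc i) [0..<n] = tl ys" if "length ys = Suc n" for ys :: "nat list"
    using that by (intro nth_equalityI) (auto simp: nth_tl)
  have "computable_fn (Suc n) (\<lambda>ys. F (map (\<lambda>G. G ys) (map (\<lambda>i ys. ys ! Suc i) [0..<n])))"
    by (rule computable_fn_comp) (use F in \<open>auto intro: computable_fn_proj\<close>)
  then show ?thesis
    by (rule computable_fn_cong) (simp add: tl_eq comp_def)
qed

lemma computable_fn_add:
  "computable_fn n F \<Longrightarrow> computable_fn n G \<Longrightarrow> computable_fn n (\<lambda>xs. F xs + G xs)"
proof -
  have rec_add: "rec_nat b (\<lambda>k r. Suc r) a = a + b" for a b :: nat
    by (induction a) auto
  have "computable_fn (Suc (Suc 0))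
      (\<lambda>xs. rec_nat ((\<lambda>ys. ys ! 0) (tl xs)) (\<lambda>k r. (\<lambda>ys. Suc (ys ! 0)) (r # k # tl xs)) (hd xs))"
    by (rule computable_fn_prec) (auto intro: computable_fn_proj computable_fn_Suc)
  then have "computable_fn 2 (\<lambda>xs. xs ! 0 + xs ! 1)"
    unfolding numeral_2_eq_2 by (rule computable_fn_cong) (auto simp: length_Suc_conv rec_add)
  then show "computable_fn n F \<Longrightarrow> computable_fn n G \<Longrightarrow> computable_fn n (\<lambda>xs. F xs + G xs)"
    using computable_fn_comp2 by fastforce
qed

lemma computable_fn_mult:
  "computable_fn n F \<Longrightarrow> computable_fn n G \<Longrightarrow> computable_fn n (\<lambda>xs. F xs * G xs)"
proof -
  have rec_mult: "rec_nat 0 (\<lambda>k r. r + b) a = a * b" for a b :: nat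
    by (induction a) auto
  have "computable_fn (Suc (Suc (Suc 0))) (\<lambda>ys. ys ! 0 + ys ! 2)"
    by (intro computable_fn_add computable_fn_proj) auto
  then have "computable_fn (Suc (Suc 0))
      (\<lambda>xs. rec_nat ((\<lambda>_. 0) (tl xs)) (\<lambda>k r. (\<lambda>ys. ys ! 0 + ys ! 2) (r # k # tl xs)) (hd xs))"
    by (rule computable_fn_prec[OF computable_fn_const])
  then have "computable_fn 2 (\<lambda>xs. xs ! 0 * xs ! 1)"
    unfolding numeral_2_eq_2 by (rule computable_fn_cong) (auto simp: length_Suc_conv rec_mult)
  then show "computable_fn n F \<Longrightarrow> computable_fn n G \<Longrightarrow> computable_fn n (\<lambda>xs. F xs * G xs)"
    using computable_fn_comp2 by fastforce
qed

lemma computable_fn_diff: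
  "computable_fn n F \<Longrightarrow> computable_fn n G \<Longrightarrow> computable_fn n (\<lambda>xs. F xs - G xs)"
proof -
  have rec_pred: "rec_nat 0 (\<lambda>k r. k) a = a - 1" for a :: nat
    by (cases a) auto
  have rec_diff: "rec_nat b (\<lambda>k r. r - Suc 0) a = b - a" for a b :: nat
    by (induction a) auto
  have "computable_fn (Suc 0) (\<lambda>xs. rec_nat ((\<lambda>_. 0) (tl xs)) (\<lambda>k r. (\<lambda>ys. ys ! 1) (r # k # tl xs)) (hd xs))"
    by (rule computable_fn_prec[OF computable_fn_const computable_fn_proj]) simp
  then have pred: "computable_fn 1 (\<lambda>xs. xs ! 0 - 1)"
    unfolding One_nat_def by (rule computable_fn_cong) (auto simp: length_Suc_conv rec_pred)
  have step: "computable_fn (Suc (Suc (Suc 0))) (\<lambda>ys. ys ! 0 - 1)"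
    using computable_fn_comp1[OF pred computable_fn_proj, of 0] by simp
  have "computable_fn (Suc (Suc 0))
      (\<lambda>xs. rec_nat ((\<lambda>ys. ys ! 0) (tl xs)) (\<lambda>k r. (\<lambda>ys. ys ! 0 - 1) (r # k # tl xs)) (hd xs))"
    using computable_fn_prec[OF computable_fn_proj step] by simp
  then have "computable_fn 2 (\<lambda>xs. xs ! 1 - xs ! 0)"
    unfolding numeral_2_eq_2 by (rule computable_fn_cong) (auto simp: length_Suc_conv rec_diff)
  then show "computable_fn n F \<Longrightarrow> computable_fn n G \<Longrightarrow> computable_fn n (\<lambda>xs. F xs - G xs)"
    using computable_fn_comp2[where F = "\<lambda>xs. xs ! 1 - xs ! 0" and G\<^sub>1 = G and G\<^sub>2 = F] by simp
qed

lemma computable_fn_power2: "computable_fn n F \<Longrightarrow> computable_fn n (\<lambda>xs. 2 ^ F xs)"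
proof -
  have rec_power: "rec_nat (Suc 0) (\<lambda>k r. r * 2) a = (2::nat) ^ a" for a :: nat
    by (induction a) auto
  have "computable_fn (Suc (Suc 0)) (\<lambda>ys. ys ! 0 * 2)"
    by (intro computable_fn_mult computable_fn_proj computable_fn_const) simp
  then have "computable_fn (Suc 0)
      (\<lambda>xs. rec_nat ((\<lambda>_. 1) (tl xs)) (\<lambda>k r. (\<lambda>ys. ys ! 0 * 2) (r # k # tl xs)) (hd xs))"
    by (rule computable_fn_prec[OF computable_fn_const])
  then have "computable_fn 1 (\<lambda>xs. 2 ^ (xs ! 0))"
    unfolding One_nat_def by (rule computable_fn_cong) (auto simp: length_Suc_conv rec_power)
  then show "computable_fn n F \<Longrightarrow> computable_fn n (\<lambda>xs. 2 ^ F xs)"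
    using computable_fn_comp1 by fastforce
qed

lemma computable_fn_sum:
  assumes "computable_fn (Suc n) F"
  shows "computable_fn (Suc n) (\<lambda>xs. \<Sum>z<hd xs. F (z # tl xs))"
proof -
  have rec_sum: "rec_nat 0 (\<lambda>k r. r + g k) m = (\<Sum>z<m. g z)" for g :: "nat \<Rightarrow> nat" and m
    by (induction m) auto
  have "computable_fn (Suc (Suc n)) (\<lambda>ys. ys ! 0 + F (tl ys))"
    by (rule computable_fn_add[OF computable_fn_proj computable_fn_tl[OF assms]]) simp
  then have "computable_fn (Suc n)
      (\<lambda>xs. rec_nat ((\<lambda>_. 0) (tl xs)) (\<lambda>k r. (\<lambda>ys. ys ! 0 + F (tl ys)) (r # k # tl xs)) (hd xs))"
    by (rule computable_fn_prec[OF computable_fn_const])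
  then show ?thesis
    by (rule computable_fn_cong) (simp add: rec_sum)
qed

definition decidable :: "nat \<Rightarrow> (nat list \<Rightarrow> bool) \<Rightarrow> bool" where
  "decidable n P \<longleftrightarrow> computable_fn n (\<lambda>xs. of_bool (P xs))"

lemma decidable_le:
  assumes "computable_fn n F" and "computable_fn n G"
  shows "decidable n (\<lambda>xs. F xs \<le> G xs)"
proof -
  have "computable_fn n (\<lambda>xs. 1 - (F xs - G xs))"
    using assms by (intro computable_fn_diff computable_fn_const)
  then show ?thesis
    unfolding decidable_def by (rule computable_fn_cong) simp
qed

lemma decidable_Not:
  assumes "decidable n P"
  shows "decidable n (\<lambda>xs. \<not> P xs)"
proof -
  have "computable_fn n (\<lambda>xs. 1 - of_bool (P xs))"
    using assms unfolding decidable_def by (intro computable_fn_diff computable_fn_const)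
  then show ?thesis
    unfolding decidable_def by (rule computable_fn_cong) simp
qed

lemma decidable_imp:
  assumes "decidable n P" and "decidable n Q"
  shows "decidable n (\<lambda>xs. P xs \<longrightarrow> Q xs)"
proof -
  have "computable_fn n (\<lambda>xs. 1 - of_bool (P xs) * (1 - of_bool (Q xs)))"
    using assms unfolding decidable_def
    by (intro computable_fn_diff computable_fn_mult computable_fn_const)
  then show ?thesis
    unfolding decidable_def by (rule computable_fn_cong) simp
qed

lemma decidable_comp2:
  "decidable 2 P \<Longrightarrow> computable_fn n G\<^sub>1 \<Longrightarrow> computable_fn n G\<^sub>2
    \<Longrightarrow> decidable n (\<lambda>xs. P [G\<^sub>1 xs, G\<^sub>2 xs])"
  unfolding decidable_def by (rule computable_fn_comp2)

lemma decidable_comp3: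
  "decidable 3 P \<Longrightarrow> computable_fn n G\<^sub>1 \<Longrightarrow> computable_fn n G\<^sub>2 \<Longrightarrow> computable_fn n G\<^sub>3
    \<Longrightarrow> decidable n (\<lambda>xs. P [G\<^sub>1 xs, G\<^sub>2 xs, G\<^sub>3 xs])"
  unfolding decidable_def by (rule computable_fn_comp3)

lemma computable_fn_count:
  "decidable (Suc n) P \<Longrightarrow> computable_fn (Suc n) (\<lambda>xs. card ({..<hd xs} \<inter> {z. P (z # tl xs)}))"
  unfolding decidable_def by (drule computable_fn_sum) simp

lemma decidable_bex:
  assumes "decidable (Suc n) P"
  shows "decidable (Suc n) (\<lambda>xs. \<exists>z<hd xs. P (z # tl xs))"
proof -
  have "1 - (1 - card ({..<m} \<inter> {z. Q z})) = of_bool (\<exists>z<m. Q z)" for m and Q :: "nat \<Rightarrow> bool"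
  proof (cases "\<exists>z<m. Q z")
    case True
    then have "0 < card ({..<m} \<inter> {z. Q z})"
      by (auto simp: card_gt_0_iff)
    with True show ?thesis
      by simp
  next
    case False
    then have "{..<m} \<inter> {z. Q z} = {}"
      by auto
    with False show ?thesis
      by simp
  qed
  moreover have "computable_fn (Suc n) (\<lambda>xs. 1 - (1 - card ({..<hd xs} \<inter> {z. P (z # tl xs)})))"
    using computable_fn_count[OF assms] by (intro computable_fn_diff computable_fn_const)
  ultimately show ?thesis
    unfolding decidable_def by simp
qed

lemma decidable_ball:
  "decidable (Suc n) P \<Longrightarrow> decidable (Suc n) (\<lambda>xs. \<forall>z<hd xs. P (z # tl xs))"
  by (drule decidable_bex[OF decidable_Not], drule decidable_Not) simp

lemma computable_fn_Least:
  assumes "decidable (Suc n) P" and "\<forall>xs. length xs = n \<longrightarrow> (\<exists>y. P (y # xs))"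
  shows "computable_fn n (\<lambda>xs. LEAST y. P (y # xs))"
proof -
  have eq: "(1 - of_bool b = (0::nat)) = b" for b
    by simp
  have "computable_fn (Suc n) (\<lambda>xs. 1 - of_bool (P xs))"
    using assms(1) unfolding decidable_def by (intro computable_fn_diff computable_fn_const)
  from computable_fn_mu[OF this] show ?thesis
    using assms(2) unfolding eq by blast
qed

lemma computable_fun_iff_computable_fn: "computable_fun F \<longleftrightarrow> computable_fn 1 (\<lambda>xs. F (xs ! 0))"
proof -
  have "length xs = 1 \<longleftrightarrow> xs = [xs ! 0]" for xs :: "nat list"
    by (cases xs) auto
  then show ?thesis
    unfolding computable_fun_def computable_fn_def by (metis length_Cons list.size(3) nth_Cons_0)
qed

lemma decidable_imp_computable_set:
  assumes "decidable 1 (\<lambda>xs. xs ! 0 \<in> S)"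
  shows "computable_set S"
proof -
  have "computable_fn 1 (\<lambda>xs. 1 - of_bool (xs ! 0 \<in> S))"
    using assms unfolding decidable_def by (intro computable_fn_diff computable_fn_const)
  then obtain g where "recfn 1 g" "\<forall>xs. length xs = 1 \<longrightarrow> g xs = 1 - of_bool (xs ! 0 \<in> S)"
    unfolding computable_fn_def by blast
  then show ?thesis
    unfolding computable_set_def by (intro exI[of _ g]) simp
qed

section \<open>Density bounds\<close>

lemma rho_ge_iff:
  assumes "0 < n"
  shows "1 - 1 / 2 ^ k \<le> rho n S \<longleftrightarrow> 2 ^ k * (n - card (S \<inter> {0..<n})) \<le> n"
proof -
  have c: "card (S \<inter> {0..<n}) \<le> n"
    using card_mono[of "{0..<n}" "S \<inter> {0..<n}"] by auto
  have "1 - 1 / 2 ^ k \<le> rho n S \<longleftrightarrow> 2 ^ k * (real n - card (S \<inter> {0..<n})) \<le> real n"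
    using assms unfolding rho_def by (simp add: field_simps)
  also have "\<dots> \<longleftrightarrow> 2 ^ k * (n - card (S \<inter> {0..<n})) \<le> n"
  proof -
    have "2 ^ k * (real n - card (S \<inter> {0..<n})) = real (2 ^ k * (n - card (S \<inter> {0..<n})))"
      using c by (simp add: of_nat_diff)
    then show ?thesis
      by linarith
  qed
  finally show ?thesis .
qed

lemma density_one_witness_imp_has_density_one:
  assumes "density_one_witness w S"
  shows "has_density_one S"
  unfolding has_density_one_def
proof (rule LIMSEQ_I)
  fix r :: real
  assume "0 < r"
  then obtain k where k: "(1 / 2) ^ k < r"
    using real_arch_pow_inv[of r "1 / 2"] by auto
  have "norm (rho n S - 1) < r" if "max (w k) 1 \<le> n" for n
  proof -
    have "rho n S \<ge> 1 - 1 / 2 ^ k"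
      using assms that unfolding density_one_witness_def by auto
    moreover have "rho n S \<le> 1"
      using card_mono[of "{0..<n}" "S \<inter> {0..<n}"] that unfolding rho_def by auto
    ultimately show ?thesis
      using k by (simp add: power_divide)
  qed
  then show "\<exists>n\<^sub>0. \<forall>n\<ge>n\<^sub>0. norm (rho n S - 1) < r"
    by blast
qed

lemma density_transfer:
  fixes T B :: "nat set"
  assumes "T \<inter> {h..<n} \<subseteq> B"
    and "2 ^ Suc k * (n - card (T \<inter> {0..<n})) \<le> n"
    and "2 ^ Suc k * h \<le> n"
  shows "2 ^ k * (n - card (B \<inter> {0..<n})) \<le> n"
proof -
  have "card (T \<inter> {0..<n}) \<le> card ({0..<h} \<union> (B \<inter> {0..<n}))"
    using assms(1) by (intro card_mono) auto
  also have "\<dots> \<le> h + card (B \<inter> {0..<n})"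
    using card_Un_le[of "{0..<h}" "B \<inter> {0..<n}"] by simp
  finally have "n - card (B \<inter> {0..<n}) \<le> (n - card (T \<inter> {0..<n})) + h"
    by linarith
  then have "2 ^ Suc k * (n - card (B \<inter> {0..<n})) \<le> 2 ^ Suc k * (n - card (T \<inter> {0..<n})) + 2 ^ Suc k * h"
    by (metis add_mult_distrib2 mult_le_mono2)
  also have "\<dots> \<le> 2 * n"
    using assms(2,3) by simp
  finally show ?thesis
    by simp
qed

section \<open>Stages of a c.e. set\<close>

definition stage :: "(nat list \<Rightarrow> nat) \<Rightarrow> nat \<Rightarrow> nat set" where
  "stage f s = {z. \<exists>y\<le>s. f [y, z] = 0}"

lemma stage_mono: "s \<le> t \<Longrightarrow> stage f s \<subseteq> stage f t"
  unfolding stage_def by (auto intro: order_trans)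

lemma stage_subset: "stage f s \<subseteq> {z. \<exists>y. f [y, z] = 0}"
  unfolding stage_def by auto

lemma finite_subset_stage:
  assumes "finite F" and "F \<subseteq> {z. \<exists>y. f [y, z] = 0}"
  shows "\<exists>s. F \<subseteq> stage f s"
proof -
  have "\<forall>z\<in>F. \<exists>y. f [y, z] = 0"
    using assms(2) by auto
  then obtain g where g: "\<forall>z\<in>F. f [g z, z] = 0"
    by (auto dest: bchoice)
  have "g z \<le> (\<Sum>z\<in>F. g z)" if "z \<in> F" for z
    using assms(1) that by (intro member_le_sum) simp_all
  then have "F \<subseteq> stage f (\<Sum>z\<in>F. g z)"
    using g unfolding stage_def by blast
  then show ?thesis ..
qed

lemma decidable_stage:
  assumes "computable_fn 2 f"
  shows "decidable 2 (\<lambda>xs. xs ! 1 \<in> stage f (xs ! 0))"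
proof -
  have "decidable (Suc (Suc (Suc 0))) (\<lambda>ys. f [ys ! 0, ys ! 2] \<le> 0)"
    by (intro decidable_le computable_fn_comp2[OF assms] computable_fn_proj computable_fn_const) simp_all
  from decidable_bex[OF this]
  have "decidable 3 (\<lambda>ys. \<exists>y<hd ys. f [y, ys ! 2] \<le> 0)"
    unfolding decidable_def numeral_3_eq_3
    by (rule computable_fn_cong) (auto simp: length_Suc_conv)
  then have "decidable 2 (\<lambda>xs. \<exists>y<Suc (xs ! 0). f [y, xs ! 1] \<le> 0)"
    using decidable_comp3[of "\<lambda>ys. \<exists>y<hd ys. f [y, ys ! 2] \<le> 0" 2 "\<lambda>xs. Suc (xs ! 0)"
        "\<lambda>xs. xs ! 0" "\<lambda>xs. xs ! 1"]
    by (simp add: computable_fn_Suc computable_fn_proj)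
  then show ?thesis
    unfolding decidable_def stage_def by (simp add: less_Suc_eq_le)
qed

definition density_one_witness_upto :: "(nat \<Rightarrow> nat) \<Rightarrow> nat set \<Rightarrow> nat \<Rightarrow> nat \<Rightarrow> bool" where
  "density_one_witness_upto w S K N \<longleftrightarrow>
     (\<forall>n<N. \<forall>k\<le>K. w k \<le> n \<longrightarrow> 2 ^ k * (n - card (S \<inter> {0..<n})) \<le> n)"

lemma density_one_witness_imp_upto:
  assumes "density_one_witness w S"
  shows "density_one_witness_upto w S K N"
  unfolding density_one_witness_upto_def
proof (intro allI impI)
  fix n k
  assume "w k \<le> n"
  show "2 ^ k * (n - card (S \<inter> {0..<n})) \<le> n"
  proof (cases "n = 0")
    case False
    with \<open>w k \<le> n\<close> have "1 - 1 / 2 ^ k \<le> rho n S"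
      using assms unfolding density_one_witness_def by simp
    with False show ?thesis
      using rho_ge_iff by simp
  qed simp
qed

lemma density_one_witness_upto_mono:
  "density_one_witness_upto w S K N \<Longrightarrow> K' \<le> K \<Longrightarrow> N' \<le> N \<Longrightarrow> density_one_witness_upto w S K' N'"
  unfolding density_one_witness_upto_def by (meson le_trans less_le_trans)

lemma density_one_witness_upto_cong:
  assumes "S \<inter> {0..<N} = T \<inter> {0..<N}"
  shows "density_one_witness_upto w S K N \<longleftrightarrow> density_one_witness_upto w T K N"
proof -
  have "S \<inter> {0..<n} = T \<inter> {0..<n}" if "n < N" for n
  proof -
    have "S \<inter> {0..<n} = (S \<inter> {0..<N}) \<inter> {0..<n}" "T \<inter> {0..<n} = (T \<inter> {0..<N}) \<inter> {0..<n}"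
      using that by auto
    with assms show ?thesis
      by metis
  qed
  then show ?thesis
    by (simp add: density_one_witness_upto_def)
qed

lemma computable_fn_card_stage:
  assumes "computable_fn 2 f"
  shows "computable_fn 2 (\<lambda>xs. card (stage f (xs ! 1) \<inter> {0..<xs ! 0}))"
proof -
  have "decidable 2 (\<lambda>ys. ys ! 0 \<in> stage f (ys ! 1))"
    using decidable_comp2[OF decidable_stage[OF assms], of 2 "\<lambda>ys. ys ! 1" "\<lambda>ys. ys ! 0"]
    by (simp add: computable_fn_proj)
  from computable_fn_count[of "Suc 0", OF this[unfolded numeral_2_eq_2]]
  show ?thesis
    unfolding numeral_2_eq_2
    by (rule computable_fn_cong) (auto simp: length_Suc_conv Int_commute atLeast0LessThan)
qed

lemma decidable_density_one_witness_upto_stage: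
  assumes f: "computable_fn 2 f" and w: "computable_fn 1 (\<lambda>xs. w (xs ! 0))"
  shows "decidable 3 (\<lambda>xs. density_one_witness_upto w (stage f (xs ! 0)) (xs ! 1) (xs ! 2))"
proof -
  let ?bound = "\<lambda>k n s. w k \<le> n \<longrightarrow> 2 ^ k * (n - card (stage f s \<inter> {0..<n})) \<le> n"
  have "computable_fn 3 (\<lambda>ys. w (ys ! 0))"
    using computable_fn_comp1[OF w computable_fn_proj, of 0 3] by simp
  moreover have "computable_fn 3 (\<lambda>ys. card (stage f (ys ! 2) \<inter> {0..<ys ! 1}))"
    using computable_fn_comp2[OF computable_fn_card_stage[OF f] computable_fn_proj computable_fn_proj,
        of 1 3 2] by simp
  ultimately have "decidable 3 (\<lambda>ys. ?bound (ys ! 0) (ys ! 1) (ys ! 2))"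
    by (intro decidable_imp decidable_le computable_fn_mult computable_fn_power2 computable_fn_diff
        computable_fn_proj) simp_all
  from decidable_ball[of "Suc (Suc 0)", OF this[unfolded numeral_3_eq_3]]
  have "decidable 3 (\<lambda>ys. \<forall>k<ys ! 0. ?bound k (ys ! 1) (ys ! 2))"
    unfolding decidable_def numeral_3_eq_3
    by (rule computable_fn_cong) (auto simp: length_Suc_conv)
  from decidable_comp3[OF this, of 3 "\<lambda>ys. ys ! 1" "\<lambda>ys. ys ! 0" "\<lambda>ys. ys ! 2"]
  have "decidable 3 (\<lambda>ys. \<forall>k<ys ! 1. ?bound k (ys ! 0) (ys ! 2))"
    by (simp add: computable_fn_proj)
  from decidable_ball[of "Suc (Suc 0)", OF this[unfolded numeral_3_eq_3]]
  have "decidable 3 (\<lambda>ys. \<forall>n<ys ! 0. \<forall>k<ys ! 1. ?bound k n (ys ! 2))"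
    unfolding decidable_def numeral_3_eq_3
    by (rule computable_fn_cong) (force simp: length_Suc_conv)
  from decidable_comp3[OF this, of 3 "\<lambda>xs. xs ! 2" "\<lambda>xs. Suc (xs ! 1)" "\<lambda>xs. xs ! 0"]
  have "decidable 3 (\<lambda>xs. \<forall>n<xs ! 2. \<forall>k<Suc (xs ! 1). ?bound k n (xs ! 0))"
    by (simp add: computable_fn_proj computable_fn_Suc)
  then show ?thesis
    unfolding density_one_witness_upto_def less_Suc_eq_le .
qed

section \<open>A computable subset of density one\<close>

locale ce_density_one_effectively =
  fixes f :: "nat list \<Rightarrow> nat" and w :: "nat \<Rightarrow> nat"
  assumes recfn_f: "recfn 2 f"
    and computable_w: "computable_fun w"
    and witness_w: "density_one_witness w {z. \<exists>y. f [y, z] = 0}"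
begin

definition dense_stage :: "nat \<Rightarrow> nat" where
  "dense_stage x = (LEAST s. density_one_witness_upto w (stage f s) x (Suc x * 2 ^ x))"

definition timely_part :: "nat set" where
  "timely_part = {x. x \<in> stage f (dense_stage x)}"

lemma density_one_witness_upto_stage_exists: "\<exists>s. density_one_witness_upto w (stage f s) K N"
proof -
  let ?A = "{z. \<exists>y. f [y, z] = 0}"
  obtain s where "?A \<inter> {0..<N} \<subseteq> stage f s"
    using finite_subset_stage[of "?A \<inter> {0..<N}" f] by auto
  then have "stage f s \<inter> {0..<N} = ?A \<inter> {0..<N}"
    using stage_subset[of f s] by blast
  then show ?thesis
    using density_one_witness_upto_cong density_one_witness_imp_upto[OF witness_w] by blast
qed

lemma density_one_witness_upto_dense_stage:
  "density_one_witness_upto w (stage f (dense_stage x)) x (Suc x * 2 ^ x)"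
  unfolding dense_stage_def by (rule LeastI_ex) (rule density_one_witness_upto_stage_exists)

lemma dense_stage_mono:
  assumes "x' \<le> x"
  shows "dense_stage x' \<le> dense_stage x"
proof -
  have "Suc x' * 2 ^ x' \<le> Suc x * 2 ^ x"
    using assms by (intro mult_le_mono) (auto intro: power_increasing)
  then have "density_one_witness_upto w (stage f (dense_stage x)) x' (Suc x' * 2 ^ x')"
    using density_one_witness_upto_mono[OF density_one_witness_upto_dense_stage assms] by blast
  then show ?thesis
    unfolding dense_stage_def[of x'] by (rule Least_le)
qed

lemma timely_part_subset: "timely_part \<subseteq> {z. \<exists>y. f [y, z] = 0}"
  unfolding timely_part_def using stage_subset by blast

lemma computable_fn_dense_stage: "computable_fn 1 (\<lambda>xs. dense_stage (xs ! 0))"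
proof -
  have f: "computable_fn 2 f"
    using recfn_f by (rule recfn_computable_fn)
  have w: "computable_fn 1 (\<lambda>xs. w (xs ! 0))"
    using computable_w computable_fun_iff_computable_fn by blast
  have N: "computable_fn 2 (\<lambda>xs. Suc (xs ! 1) * 2 ^ (xs ! 1))"
    by (intro computable_fn_mult computable_fn_Suc computable_fn_power2 computable_fn_proj) simp_all
  have "decidable 2
      (\<lambda>xs. density_one_witness_upto w (stage f (xs ! 0)) (xs ! 1) (Suc (xs ! 1) * 2 ^ (xs ! 1)))"
    using decidable_comp3[OF decidable_density_one_witness_upto_stage[OF f w],
        of 2 "\<lambda>xs. xs ! 0" "\<lambda>xs. xs ! 1" "\<lambda>xs. Suc (xs ! 1) * 2 ^ (xs ! 1)"] N
    by (simp add: computable_fn_proj)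
  moreover have "\<forall>xs. length xs = Suc 0 \<longrightarrow>
      (\<exists>y. density_one_witness_upto w (stage f y) (xs ! 0) (Suc (xs ! 0) * 2 ^ (xs ! 0)))"
    using density_one_witness_upto_stage_exists by blast
  ultimately have "computable_fn (Suc 0)
      (\<lambda>xs. LEAST y. density_one_witness_upto w (stage f y) (xs ! 0) (Suc (xs ! 0) * 2 ^ (xs ! 0)))"
    using computable_fn_Least[of "Suc 0"
        "\<lambda>xs. density_one_witness_upto w (stage f (xs ! 0)) (xs ! 1) (Suc (xs ! 1) * 2 ^ (xs ! 1))"]
    by (simp add: numeral_2_eq_2)
  then show ?thesis
    unfolding One_nat_def dense_stage_def
    by (rule computable_fn_cong) (auto simp: length_Suc_conv)
qed

lemma computable_set_timely_part: "computable_set timely_part"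
proof -
  have "decidable 1 (\<lambda>xs. xs ! 0 \<in> stage f (dense_stage (xs ! 0)))"
    using decidable_comp2[OF decidable_stage[OF recfn_computable_fn[OF recfn_f]]
        computable_fn_dense_stage computable_fn_proj, of 0] by simp
  then show ?thesis
    unfolding timely_part_def by (intro decidable_imp_computable_set) simp
qed

lemma timely_part_density_bound:
  assumes "w (Suc k) + Suc k * 2 ^ Suc k \<le> n"
  shows "2 ^ k * (n - card (timely_part \<inter> {0..<n})) \<le> n"
proof -
  define h where "h = n div 2 ^ Suc k"
  have h_le: "2 ^ Suc k * h \<le> n"
    unfolding h_def by (metis div_times_less_eq_dividend mult.commute)
  have "Suc k * 2 ^ Suc k div 2 ^ Suc k \<le> h"
    unfolding h_def using assms by (intro div_le_mono) simp
  then have k_le: "Suc k \<le> h"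
    by simp
  have "n < Suc h * 2 ^ Suc k"
  proof -
    have "n = h * 2 ^ Suc k + n mod 2 ^ Suc k"
      unfolding h_def by (rule div_mult_mod_eq[symmetric])
    moreover have "n mod 2 ^ Suc k < 2 ^ Suc k"
      by simp
    moreover have "Suc h * 2 ^ Suc k = 2 ^ Suc k + h * 2 ^ Suc k"
      by (rule mult_Suc)
    ultimately show ?thesis
      by linarith
  qed
  also have "\<dots> \<le> Suc h * 2 ^ h"
    using k_le by (intro mult_le_mono2 power_increasing) auto
  finally have "n < Suc h * 2 ^ h" .
  moreover have "w (Suc k) \<le> n"
    using assms by simp
  ultimately have "2 ^ Suc k * (n - card (stage f (dense_stage h) \<inter> {0..<n})) \<le> n"
    using density_one_witness_upto_dense_stage[of h] k_le
    unfolding density_one_witness_upto_def by blast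
  moreover have "stage f (dense_stage h) \<inter> {h..<n} \<subseteq> timely_part"
  proof
    fix z
    assume z: "z \<in> stage f (dense_stage h) \<inter> {h..<n}"
    then have "stage f (dense_stage h) \<subseteq> stage f (dense_stage z)"
      by (intro stage_mono dense_stage_mono) simp
    with z show "z \<in> timely_part"
      unfolding timely_part_def by blast
  qed
  ultimately show ?thesis
    using density_transfer h_le by blast
qed

lemma density_one_witness_timely_part:
  "density_one_witness (\<lambda>k. w (Suc k) + Suc k * 2 ^ Suc k) timely_part"
  unfolding density_one_witness_def using rho_ge_iff timely_part_density_bound by simp

lemma computable_fun_timely_part_witness: "computable_fun (\<lambda>k. w (Suc k) + Suc k * 2 ^ Suc k)"
proof -
  have "computable_fn 1 (\<lambda>xs. w (xs ! 0))"
    using computable_w computable_fun_iff_computable_fn by blast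
  from computable_fn_comp1[OF this computable_fn_Suc[OF computable_fn_proj]]
  have W: "computable_fn 1 (\<lambda>xs. w (Suc (xs ! 0)))"
    by simp
  have "computable_fn 1 (\<lambda>xs. w (Suc (xs ! 0)) + Suc (xs ! 0) * 2 ^ Suc (xs ! 0))"
    by (intro W computable_fn_add computable_fn_mult computable_fn_power2 computable_fn_Suc
        computable_fn_proj) simp_all
  then show ?thesis
    unfolding computable_fun_iff_computable_fn .
qed

end

theorem mainTheorem11:
  fixes A :: "nat set"
  assumes "ce_set A" and "density_one_effectively A"
  shows "\<exists>B. B \<subseteq> A \<and> computable_set B \<and> density_one_effectively B"
proof -
  obtain f where f: "recfn 2 f" and A: "A = {z. \<exists>y. f [y, z] = 0}"
    using assms(1) unfolding ce_set_def by blast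
  obtain w where "computable_fun w" and "density_one_witness w A"
    using assms(2) unfolding density_one_effectively_def by blast
  with f A interpret ce_density_one_effectively f w
    by unfold_locales simp_all
  have "density_one_effectively timely_part"
    unfolding density_one_effectively_def
    using density_one_witness_imp_has_density_one density_one_witness_timely_part
      computable_fun_timely_part_witness by blast
  then show ?thesis
    using timely_part_subset computable_set_timely_part A by blast
qed

end
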